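(* Let $P,Q,R$ be plane posets. (1) $P\triangleleft Q\leq R$ if and only if there exists a biideal $I_0$ of $R$ such that $P\leq R\setminus I_0$ and $Q\leq I_0$. Moreover, if this holds, $I_0$ is unique and $I_0=\theta_{PQ,R}(Q)$. (2) $PQ\leq R$ if and only if there exists a plane subposet $I_0$ of $R$ such that $R=(R\setminus I_0)I_0$, $P\leq R\setminus I_0$ and $Q\leq I_0$. Moreover, if this holds, $I_0$ is unique and $I_0=\theta_{P\triangleleft Q,R}(Q)$. (3) $\iota(PQ)\leq R$ if and only if there exists a biideal $I_0$ of $R$ such that $\iota(R\setminus I_0)\leq P$ and $\iota(I_0)\leq Q$. Moreover, if this holds, $I_0$ is unique and $I_0=\theta_{PQ,R}(Q)$. (4) $\iota(P\triangleleft Q)\leq R$ if and only if there exists a plane subposet $I_0$ of $R$ such that $R=(R\setminus I_0)I_0$, $\iota(R\setminus I_0)\leq P$ and $\iota(I_0)\leq Q$. Moreover, if this holds, $I_0$ is unique and $I_0=\theta_{P\triangleleft Q,R}(Q)$.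
   Context: A plane poset is a finite set with two partial orders $\leq_h,\leq_r$ such that two distinct elements are $\leq_h$-comparable iff they are not $\leq_r$-comparable, considered up to isomorphism; a subset with the restricted orders is a plane subposet. On a plane poset, $x\leq y$ iff ($x\leq_h y$ or $x\leq_r y$) is a total order (known fact). For plane posets $P,Q$ of the same cardinality, $\theta_{P,Q}$ is the increasing bijection $P\to Q$ for these total orders, and $P\leq Q$ means: for all $x,y\in P$, $\theta_{P,Q}(x)\leq_h\theta_{P,Q}(y)$ in $Q$ implies $x\leq_h y$ in $P$ (the relation $\leq$ is only defined between plane posets of the same cardinality). A biideal of $P$ is a subset $I$ such that $x\in I$ and ($x\leq_h y$ or $x\leq_r y$) imply $y\in I$. $PQ$ is the plane poset on $P\sqcup Q$ in which $P,Q$ are plane subposets, no element of $P$ is $\leq_h$-comparable to an element of $Q$, and $x<_r y$ for all $x\in P,y\in Q$; $P\triangleleft Q$ is defined likewise with $x<_h y$ for all $x\in P,y\in Q$ and no $\leq_r$-comparabilities between $P$ and $Q$. For a plane subposet $I_0$ of $R$, $R=(R\setminus I_0)I_0$ means $R$ equals the product $PQ$-type construction of its plane subposets $R\setminus I_0$ and $I_0$. $\iota(P)=(P,\leq_r,\leq_h)$ exchanges the two orders. *)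

theory Defs
  imports Main
begin

type_synonym 'a pp = "'a set \<times> ('a \<Rightarrow> 'a \<Rightarrow> bool) \<times> ('a \<Rightarrow> 'a \<Rightarrow> bool)"

definition pcar :: "'a pp \<Rightarrow> 'a set" where "pcar P = fst P"
definition hle :: "'a pp \<Rightarrow> 'a \<Rightarrow> 'a \<Rightarrow> bool" where "hle P = fst (snd P)"
definition rle :: "'a pp \<Rightarrow> 'a \<Rightarrow> 'a \<Rightarrow> bool" where "rle P = snd (snd P)"

definition plane_poset :: "'a pp \<Rightarrow> bool" where
  "plane_poset P \<longleftrightarrow>
     finite (pcar P)
   \<and> (\<forall>x y. hle P x y \<longrightarrow> x \<in> pcar P \<and> y \<in> pcar P)
   \<and> (\<forall>x y. rle P x y \<longrightarrow> x \<in> pcar P \<and> y \<in> pcar P)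
   \<and> (\<forall>x\<in>pcar P. hle P x x \<and> rle P x x)
   \<and> (\<forall>x y. hle P x y \<and> hle P y x \<longrightarrow> x = y)
   \<and> (\<forall>x y. rle P x y \<and> rle P y x \<longrightarrow> x = y)
   \<and> (\<forall>x y z. hle P x y \<and> hle P y z \<longrightarrow> hle P x z)
   \<and> (\<forall>x y z. rle P x y \<and> rle P y z \<longrightarrow> rle P x z)
   \<and> (\<forall>x\<in>pcar P. \<forall>y\<in>pcar P. x \<noteq> y \<longrightarrow>
        ((hle P x y \<or> hle P y x) \<longleftrightarrow> \<not> (rle P x y \<or> rle P y x)))"

definition tle :: "'a pp \<Rightarrow> 'a \<Rightarrow> 'a \<Rightarrow> bool" where
  "tle P x y \<longleftrightarrow> hle P x y \<or> rle P x y"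

definition theta :: "'a pp \<Rightarrow> 'b pp \<Rightarrow> 'a \<Rightarrow> 'b" where
  "theta P Q = (THE f. bij_betw f (pcar P) (pcar Q)
      \<and> (\<forall>x\<in>pcar P. \<forall>y\<in>pcar P. tle P x y \<longrightarrow> tle Q (f x) (f y))
      \<and> (\<forall>x. x \<notin> pcar P \<longrightarrow> f x = undefined))"

definition ple :: "'a pp \<Rightarrow> 'b pp \<Rightarrow> bool" where
  "ple P Q \<longleftrightarrow> card (pcar P) = card (pcar Q)
     \<and> (\<forall>x\<in>pcar P. \<forall>y\<in>pcar P. hle Q (theta P Q x) (theta P Q y) \<longrightarrow> hle P x y)"

definition biideal :: "'a pp \<Rightarrow> 'a set \<Rightarrow> bool" where
  "biideal P I \<longleftrightarrow> I \<subseteq> pcar P \<and>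
     (\<forall>x\<in>I. \<forall>y. (hle P x y \<or> rle P x y) \<longrightarrow> y \<in> I)"

definition psub :: "'a pp \<Rightarrow> 'a set \<Rightarrow> 'a pp" where
  "psub P A = (A, \<lambda>x y. x \<in> A \<and> y \<in> A \<and> hle P x y, \<lambda>x y. x \<in> A \<and> y \<in> A \<and> rle P x y)"

definition pprod :: "'a pp \<Rightarrow> 'b pp \<Rightarrow> ('a + 'b) pp" where
  "pprod P Q = (Inl ` pcar P \<union> Inr ` pcar Q,
     \<lambda>u v. (case (u, v) of (Inl a, Inl b) \<Rightarrow> hle P a b | (Inr a, Inr b) \<Rightarrow> hle Q a b | _ \<Rightarrow> False),
     \<lambda>u v. (case (u, v) of (Inl a, Inl b) \<Rightarrow> rle P a b | (Inr a, Inr b) \<Rightarrow> rle Q a b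
              | (Inl a, Inr b) \<Rightarrow> a \<in> pcar P \<and> b \<in> pcar Q | _ \<Rightarrow> False))"

definition ptri :: "'a pp \<Rightarrow> 'b pp \<Rightarrow> ('a + 'b) pp" where
  "ptri P Q = (Inl ` pcar P \<union> Inr ` pcar Q,
     \<lambda>u v. (case (u, v) of (Inl a, Inl b) \<Rightarrow> hle P a b | (Inr a, Inr b) \<Rightarrow> hle Q a b
              | (Inl a, Inr b) \<Rightarrow> a \<in> pcar P \<and> b \<in> pcar Q | _ \<Rightarrow> False),
     \<lambda>u v. (case (u, v) of (Inl a, Inl b) \<Rightarrow> rle P a b | (Inr a, Inr b) \<Rightarrow> rle Q a b | _ \<Rightarrow> False))"

definition iota :: "'a pp \<Rightarrow> 'a pp" where
  "iota P = (pcar P, rle P, hle P)"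

definition pp_iso :: "('a \<Rightarrow> 'b) \<Rightarrow> 'a pp \<Rightarrow> 'b pp \<Rightarrow> bool" where
  "pp_iso f P Q \<longleftrightarrow> bij_betw f (pcar P) (pcar Q)
     \<and> (\<forall>x\<in>pcar P. \<forall>y\<in>pcar P. (hle P x y \<longleftrightarrow> hle Q (f x) (f y)) \<and> (rle P x y \<longleftrightarrow> rle Q (f x) (f y)))"

text \<open>R = (R \<setminus> I0) I0 : R coincides (via the identity on elements) with the product
  of its plane subposets R \<setminus> I0 and I0.\<close>
definition splits :: "'a pp \<Rightarrow> 'a set \<Rightarrow> bool" where
  "splits R I0 \<longleftrightarrow> pp_iso (case_sum id id) (pprod (psub R (pcar R - I0)) (psub R I0)) R"

end

theory Submission
  imports Defs
begin

text \<open>On a plane poset \<open>x \<le>h y \<or> x \<le>r y\<close> is a total order, so \<open>\<theta>\<close> is the unique increasing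
  bijection, computable from ranks. Both \<open>P \<triangleleft> Q\<close> and \<open>PQ\<close> carry the total order "\<open>P\<close>, then \<open>Q\<close>";
  hence \<open>\<theta>\<close> maps \<open>Q\<close> onto the final segment \<open>I0\<close> of \<open>R\<close> of size \<open>|Q|\<close>, and on
  \<open>P\<close> resp. \<open>Q\<close> it is \<open>\<theta>\<close> into \<open>R - I0\<close> resp. \<open>I0\<close>. So either product being \<open>\<le> R\<close> amounts to \<open>P \<le> R - I0\<close>,
  \<open>Q \<le> I0\<close> and a condition across the two blocks, which is void for \<open>P \<triangleleft> Q\<close> and says that
  nothing in \<open>R - I0\<close> is h-below anything in \<open>I0\<close> for \<open>PQ\<close>. A final segment is the same as a
  biideal, and a final segment with that extra property is the same as \<open>R = (R - I0) I0\<close>.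
  Parts (3) and (4) follow by exchanging the orders, as \<open>\<iota>(PQ) = \<iota>P \<triangleleft> \<iota>Q\<close> and
  \<open>\<iota>A \<le> B \<longleftrightarrow> \<iota>B \<le> A\<close>.\<close>

section \<open>The total order of a plane poset\<close>

definition linear_pp :: "'a pp \<Rightarrow> bool" where
  "linear_pp P \<longleftrightarrow> finite (pcar P)
   \<and> (\<forall>x y. tle P x y \<longrightarrow> x \<in> pcar P \<and> y \<in> pcar P)
   \<and> (\<forall>x\<in>pcar P. tle P x x)
   \<and> (\<forall>x y. tle P x y \<and> tle P y x \<longrightarrow> x = y)
   \<and> (\<forall>x y z. tle P x y \<and> tle P y z \<longrightarrow> tle P x z)
   \<and> (\<forall>x\<in>pcar P. \<forall>y\<in>pcar P. tle P x y \<or> tle P y x)"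

lemma linear_pp_finite: "linear_pp P \<Longrightarrow> finite (pcar P)"
  and linear_pp_mem: "linear_pp P \<Longrightarrow> tle P x y \<Longrightarrow> x \<in> pcar P \<and> y \<in> pcar P"
  and linear_pp_refl: "linear_pp P \<Longrightarrow> x \<in> pcar P \<Longrightarrow> tle P x x"
  and linear_pp_antisym: "linear_pp P \<Longrightarrow> tle P x y \<Longrightarrow> tle P y x \<Longrightarrow> x = y"
  and linear_pp_trans: "linear_pp P \<Longrightarrow> tle P x y \<Longrightarrow> tle P y z \<Longrightarrow> tle P x z"
  and linear_pp_total: "linear_pp P \<Longrightarrow> x \<in> pcar P \<Longrightarrow> y \<in> pcar P \<Longrightarrow> tle P x y \<or> tle P y x"
  unfolding linear_pp_def by metis+

lemma plane_poset_finite: "plane_poset P \<Longrightarrow> finite (pcar P)"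
  and plane_poset_hle_mem: "plane_poset P \<Longrightarrow> hle P x y \<Longrightarrow> x \<in> pcar P \<and> y \<in> pcar P"
  and plane_poset_rle_mem: "plane_poset P \<Longrightarrow> rle P x y \<Longrightarrow> x \<in> pcar P \<and> y \<in> pcar P"
  and plane_poset_hle_refl: "plane_poset P \<Longrightarrow> x \<in> pcar P \<Longrightarrow> hle P x x"
  and plane_poset_rle_refl: "plane_poset P \<Longrightarrow> x \<in> pcar P \<Longrightarrow> rle P x x"
  and plane_poset_hle_antisym: "plane_poset P \<Longrightarrow> hle P x y \<Longrightarrow> hle P y x \<Longrightarrow> x = y"
  and plane_poset_rle_antisym: "plane_poset P \<Longrightarrow> rle P x y \<Longrightarrow> rle P y x \<Longrightarrow> x = y"
  and plane_poset_hle_trans: "plane_poset P \<Longrightarrow> hle P x y \<Longrightarrow> hle P y z \<Longrightarrow> hle P x z"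
  and plane_poset_rle_trans: "plane_poset P \<Longrightarrow> rle P x y \<Longrightarrow> rle P y z \<Longrightarrow> rle P x z"
  and plane_poset_hle_iff_not_rle: "plane_poset P \<Longrightarrow> x \<in> pcar P \<Longrightarrow> y \<in> pcar P \<Longrightarrow> x \<noteq> y \<Longrightarrow>
     (hle P x y \<or> hle P y x) \<longleftrightarrow> \<not> (rle P x y \<or> rle P y x)"
  unfolding plane_poset_def by metis+

lemma plane_poset_tle_mem: "plane_poset P \<Longrightarrow> tle P x y \<Longrightarrow> x \<in> pcar P \<and> y \<in> pcar P"
  unfolding tle_def using plane_poset_hle_mem plane_poset_rle_mem by metis

text \<open>In the mixed case \<open>x \<le>h y \<le>r z\<close>, the elements x, z are comparable for one of the two
  orders; \<open>z \<le>h x\<close> would make y, z both h- and r-comparable, \<open>z \<le>r x\<close> likewise x, y.\<close>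
lemma plane_poset_tle_trans:
  assumes pl: "plane_poset P" and xy: "tle P x y" and yz: "tle P y z"
  shows "tle P x z"
proof (cases "x = y \<or> y = z \<or> x = z")
  case True
  then show ?thesis
    using xy yz plane_poset_tle_mem[OF pl] plane_poset_hle_refl[OF pl] unfolding tle_def by metis
next
  case False
  have mem: "x \<in> pcar P" "y \<in> pcar P" "z \<in> pcar P"
    using xy yz plane_poset_tle_mem[OF pl] by blast+
  have xor_xy: "(hle P x y \<or> hle P y x) \<longleftrightarrow> \<not> (rle P x y \<or> rle P y x)"
    and xor_yz: "(hle P y z \<or> hle P z y) \<longleftrightarrow> \<not> (rle P y z \<or> rle P z y)"
    and xor_xz: "(hle P x z \<or> hle P z x) \<longleftrightarrow> \<not> (rle P x z \<or> rle P z x)"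
    using False mem plane_poset_hle_iff_not_rle[OF pl] by metis+
  note htrans = plane_poset_hle_trans[OF pl] and rtrans = plane_poset_rle_trans[OF pl]
  consider (hh) "hle P x y" "hle P y z" | (rr) "rle P x y" "rle P y z"
    | (hr) "hle P x y" "rle P y z" | (rh) "rle P x y" "hle P y z"
    using xy yz unfolding tle_def by blast
  then show ?thesis
  proof cases
    case hr
    then have "\<not> hle P z x" "\<not> rle P z x"
      using xor_xy xor_yz htrans[of z x y] rtrans[of y z x] by blast+
    then show ?thesis using xor_xz unfolding tle_def by blast
  next
    case rh
    then have "\<not> hle P z x" "\<not> rle P z x"
      using xor_xy xor_yz htrans[of y z x] rtrans[of z x y] by blast+
    then show ?thesis using xor_xz unfolding tle_def by blast
  qed (use htrans rtrans in \<open>auto simp: tle_def\<close>)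
qed

lemma plane_poset_linear:
  assumes pl: "plane_poset P"
  shows "linear_pp P"
  unfolding linear_pp_def
proof (intro conjI allI impI ballI)
  show "finite (pcar P)" using plane_poset_finite[OF pl] .
next
  fix x y assume "tle P x y \<and> tle P y x"
  then show "x = y"
    using plane_poset_tle_mem[OF pl] plane_poset_hle_iff_not_rle[OF pl]
      plane_poset_hle_antisym[OF pl] plane_poset_rle_antisym[OF pl]
    unfolding tle_def by metis
next
  fix x y assume "x \<in> pcar P" "y \<in> pcar P"
  then show "tle P x y \<or> tle P y x"
    using plane_poset_hle_iff_not_rle[OF pl, of x y] plane_poset_hle_refl[OF pl, of x]
    unfolding tle_def by metis
qed (use plane_poset_tle_mem[OF pl] plane_poset_tle_trans[OF pl] plane_poset_hle_refl[OF pl]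
     in \<open>blast+ | simp add: tle_def\<close>)+

section \<open>Increasing bijections between finite total orders\<close>

definition rank :: "'a pp \<Rightarrow> 'a \<Rightarrow> nat" where
  "rank P x = card {y \<in> pcar P. tle P y x \<and> y \<noteq> x}"

lemma rank_mono:
  assumes lin: "linear_pp P" and xy: "tle P x y"
  shows "rank P x \<le> rank P y"
  unfolding rank_def
proof (rule card_mono)
  show "finite {z \<in> pcar P. tle P z y \<and> z \<noteq> y}" using linear_pp_finite[OF lin] by simp
  show "{z \<in> pcar P. tle P z x \<and> z \<noteq> x} \<subseteq> {z \<in> pcar P. tle P z y \<and> z \<noteq> y}"
    using xy linear_pp_trans[OF lin, of _ x y] linear_pp_antisym[OF lin, of x y] by blast
qed

lemma rank_strict_mono:
  assumes lin: "linear_pp P" and xy: "tle P x y" "x \<noteq> y"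
  shows "rank P x < rank P y"
  unfolding rank_def
proof (rule psubset_card_mono)
  show "finite {z \<in> pcar P. tle P z y \<and> z \<noteq> y}" using linear_pp_finite[OF lin] by simp
  show "{z \<in> pcar P. tle P z x \<and> z \<noteq> x} \<subset> {z \<in> pcar P. tle P z y \<and> z \<noteq> y}"
  proof
    show "{z \<in> pcar P. tle P z x \<and> z \<noteq> x} \<subseteq> {z \<in> pcar P. tle P z y \<and> z \<noteq> y}"
      using xy linear_pp_trans[OF lin, of _ x y] linear_pp_antisym[OF lin, of x y] by blast
    show "{z \<in> pcar P. tle P z x \<and> z \<noteq> x} \<noteq> {z \<in> pcar P. tle P z y \<and> z \<noteq> y}"
      using xy linear_pp_mem[OF lin, of x y] by blast
  qed
qed

lemma rank_le_iff:
  assumes lin: "linear_pp P" and "x \<in> pcar P" "y \<in> pcar P"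
  shows "rank P x \<le> rank P y \<longleftrightarrow> tle P x y"
proof
  assume "rank P x \<le> rank P y"
  then have "\<not> (tle P y x \<and> y \<noteq> x)" using rank_strict_mono[OF lin, of y x] by linarith
  then show "tle P x y" using assms linear_pp_total[of P x y] linear_pp_refl[of P x] by blast
qed (rule rank_mono[OF lin])

lemma rank_bij_betw:
  assumes lin: "linear_pp P"
  shows "bij_betw (rank P) (pcar P) {..<card (pcar P)}"
proof -
  have inj: "inj_on (rank P) (pcar P)"
  proof (rule inj_onI)
    fix x y assume "x \<in> pcar P" "y \<in> pcar P" "rank P x = rank P y"
    then show "x = y"
      using rank_le_iff[OF lin, of x y] rank_le_iff[OF lin, of y x] linear_pp_antisym[OF lin, of x y]
      by simp
  qed
  have "rank P x < card (pcar P)" if "x \<in> pcar P" for x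
    unfolding rank_def using that linear_pp_finite[OF lin] by (intro psubset_card_mono) auto
  then have "rank P ` pcar P \<subseteq> {..<card (pcar P)}" by auto
  moreover have "card (rank P ` pcar P) = card {..<card (pcar P)}"
    using card_image[OF inj] by simp
  ultimately have "rank P ` pcar P = {..<card (pcar P)}" by (intro card_subset_eq) auto
  then show ?thesis using inj unfolding bij_betw_def by blast
qed

definition tle_iso :: "'a pp \<Rightarrow> 'b pp \<Rightarrow> ('a \<Rightarrow> 'b) \<Rightarrow> bool" where
  "tle_iso A B f \<longleftrightarrow> bij_betw f (pcar A) (pcar B)
     \<and> (\<forall>x\<in>pcar A. \<forall>y\<in>pcar A. tle A x y \<longrightarrow> tle B (f x) (f y))"

lemma tle_iso_bij_betw: "tle_iso A B f \<Longrightarrow> bij_betw f (pcar A) (pcar B)"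
  and tle_iso_mono: "tle_iso A B f \<Longrightarrow> x \<in> pcar A \<Longrightarrow> y \<in> pcar A \<Longrightarrow> tle A x y \<Longrightarrow> tle B (f x) (f y)"
  unfolding tle_iso_def by blast+

lemma tle_iso_reflect:
  assumes lA: "linear_pp A" and lB: "linear_pp B" and iso: "tle_iso A B f"
    and x: "x \<in> pcar A" and y: "y \<in> pcar A"
  shows "tle B (f x) (f y) \<longleftrightarrow> tle A x y"
proof
  assume le: "tle B (f x) (f y)"
  show "tle A x y"
  proof (rule ccontr)
    assume "\<not> tle A x y"
    then have "tle A y x" "x \<noteq> y" using linear_pp_total[OF lA x y] linear_pp_refl[OF lA x] by auto
    then have "tle B (f y) (f x)" "f x \<noteq> f y"
      using tle_iso_mono[OF iso y x] inj_onD[OF bij_betw_imp_inj_on[OF tle_iso_bij_betw[OF iso]] _ x y]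
      by auto
    then show False using le linear_pp_antisym[OF lB] by blast
  qed
qed (rule tle_iso_mono[OF iso x y])

lemma tle_iso_rank:
  assumes lA: "linear_pp A" and lB: "linear_pp B" and iso: "tle_iso A B f" and x: "x \<in> pcar A"
  shows "rank B (f x) = rank A x"
proof -
  have bij: "bij_betw f (pcar A) (pcar B)" using tle_iso_bij_betw[OF iso] .
  have "{z \<in> pcar B. tle B z (f x) \<and> z \<noteq> f x} = f ` {y \<in> pcar A. tle A y x \<and> y \<noteq> x}"
  proof (intro set_eqI iffI)
    fix z assume z: "z \<in> {z \<in> pcar B. tle B z (f x) \<and> z \<noteq> f x}"
    then obtain y where "y \<in> pcar A" "z = f y" using bij_betw_imp_surj_on[OF bij] by blast
    then show "z \<in> f ` {y \<in> pcar A. tle A y x \<and> y \<noteq> x}"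
      using z tle_iso_reflect[OF lA lB iso _ x] by blast
  next
    fix z assume "z \<in> f ` {y \<in> pcar A. tle A y x \<and> y \<noteq> x}"
    then show "z \<in> {z \<in> pcar B. tle B z (f x) \<and> z \<noteq> f x}"
      using x bij tle_iso_mono[OF iso] unfolding bij_betw_def inj_on_def by auto
  qed
  then show ?thesis
    unfolding rank_def using bij_betw_imp_inj_on[OF bij]
    by (simp add: card_image inj_on_subset)
qed

lemma tle_iso_unique:
  assumes "linear_pp A" "linear_pp B" "tle_iso A B f" "tle_iso A B g" "x \<in> pcar A"
  shows "f x = g x"
proof -
  have "f x \<in> pcar B" "g x \<in> pcar B" using assms(3-5) bij_betw_apply tle_iso_bij_betw by metis+
  moreover have "rank B (f x) = rank B (g x)" using assms tle_iso_rank by metis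
  ultimately show ?thesis using bij_betw_imp_inj_on[OF rank_bij_betw[OF assms(2)]] inj_on_def by metis
qed

text \<open>Both total orders are enumerated by their ranks \<open>0, \<dots>, n - 1\<close>.\<close>
lemma tle_iso_exists:
  assumes lA: "linear_pp A" and lB: "linear_pp B" and card: "card (pcar A) = card (pcar B)"
  obtains f where "tle_iso A B f"
proof
  let ?f = "the_inv_into (pcar B) (rank B) \<circ> rank A"
  have rA: "bij_betw (rank A) (pcar A) {..<card (pcar B)}" using rank_bij_betw[OF lA] card by simp
  note rB = rank_bij_betw[OF lB]
  have bij: "bij_betw ?f (pcar A) (pcar B)"
    using bij_betw_trans[OF rA bij_betw_the_inv_into[OF rB]] .
  have rank_f: "rank B (?f x) = rank A x" if "x \<in> pcar A" for x
    using f_the_inv_into_f_bij_betw[OF rB] bij_betwE[OF rA] that by auto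
  have "tle B (?f x) (?f y)" if x: "x \<in> pcar A" and y: "y \<in> pcar A" and "tle A x y" for x y
    using that rank_f[OF x] rank_f[OF y] rank_le_iff[OF lA x y]
      rank_le_iff[OF lB bij_betw_apply[OF bij x] bij_betw_apply[OF bij y]] by simp
  then show "tle_iso A B ?f" unfolding tle_iso_def using bij by blast
qed

lemma theta_tle_iso:
  assumes lA: "linear_pp A" and lB: "linear_pp B" and card: "card (pcar A) = card (pcar B)"
  shows "tle_iso A B (theta A B)"
proof -
  obtain f where f: "tle_iso A B f" using tle_iso_exists[OF assms] .
  define f' where "f' x = (if x \<in> pcar A then f x else undefined)" for x
  have "bij_betw f' (pcar A) (pcar B)"
    using tle_iso_bij_betw[OF f] bij_betw_cong[of "pcar A" f' f] by (simp add: f'_def)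
  then have f': "tle_iso A B f'" using f unfolding tle_iso_def f'_def by simp
  have "theta A B = f'"
    unfolding theta_def
  proof (rule the_equality)
    fix g assume g: "bij_betw g (pcar A) (pcar B)
      \<and> (\<forall>x\<in>pcar A. \<forall>y\<in>pcar A. tle A x y \<longrightarrow> tle B (g x) (g y))
      \<and> (\<forall>x. x \<notin> pcar A \<longrightarrow> g x = undefined)"
    then have "tle_iso A B g" unfolding tle_iso_def by blast
    then show "g = f'"
      using tle_iso_unique[OF lA lB _ f'] g by (intro ext) (metis f'_def)
  qed (use f' in \<open>simp add: tle_iso_def f'_def\<close>)
  then show ?thesis using f' by simp
qed

lemma theta_eqI:
  assumes "linear_pp A" "linear_pp B" "tle_iso A B g" "x \<in> pcar A"
  shows "theta A B x = g x"
proof (rule tle_iso_unique[OF assms(1,2) theta_tle_iso[OF assms(1,2)] assms(3,4)])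
  show "card (pcar A) = card (pcar B)" using bij_betw_same_card[OF tle_iso_bij_betw[OF assms(3)]] .
qed

lemma theta_cong: "pcar A = pcar B \<Longrightarrow> tle A = tle B \<Longrightarrow> theta A C = theta B C"
  unfolding theta_def by simp

lemma tle_iso_comp:
  assumes "tle_iso A B f" "tle_iso B C g"
  shows "tle_iso A C (g \<circ> f)"
  using bij_betw_trans[OF tle_iso_bij_betw[OF assms(1)] tle_iso_bij_betw[OF assms(2)]]
    tle_iso_mono[OF assms(1)] tle_iso_mono[OF assms(2)] bij_betw_apply[OF tle_iso_bij_betw[OF assms(1)]]
  unfolding tle_iso_def by simp

lemma theta_inverse:
  assumes lA: "linear_pp A" and lB: "linear_pp B" and card: "card (pcar A) = card (pcar B)"
    and x: "x \<in> pcar A"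
  shows "theta B A (theta A B x) = x"
proof -
  have "tle_iso A A (theta B A \<circ> theta A B)"
    by (rule tle_iso_comp[OF theta_tle_iso[OF lA lB card] theta_tle_iso[OF lB lA card[symmetric]]])
  moreover have "tle_iso A A id" unfolding tle_iso_def by simp
  ultimately have "(theta B A \<circ> theta A B) x = id x" by (rule tle_iso_unique[OF lA lA _ _ x])
  then show ?thesis by simp
qed

section \<open>Products, plane subposets and exchange of the orders\<close>

lemma pcar_ptri [simp]: "pcar (ptri P Q) = Inl ` pcar P \<union> Inr ` pcar Q"
  and pcar_pprod [simp]: "pcar (pprod P Q) = Inl ` pcar P \<union> Inr ` pcar Q"
  and pcar_psub [simp]: "pcar (psub R A) = A"
  and pcar_iota [simp]: "pcar (iota P) = pcar P"
  by (simp_all add: ptri_def pprod_def psub_def iota_def pcar_def)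

lemma hle_ptri [simp]:
  "hle (ptri P Q) (Inl a) (Inl b) \<longleftrightarrow> hle P a b"
  "hle (ptri P Q) (Inr c) (Inr d) \<longleftrightarrow> hle Q c d"
  "hle (ptri P Q) (Inl a) (Inr d) \<longleftrightarrow> a \<in> pcar P \<and> d \<in> pcar Q"
  "\<not> hle (ptri P Q) (Inr c) (Inl b)"
  and rle_ptri [simp]:
  "rle (ptri P Q) (Inl a) (Inl b) \<longleftrightarrow> rle P a b"
  "rle (ptri P Q) (Inr c) (Inr d) \<longleftrightarrow> rle Q c d"
  "\<not> rle (ptri P Q) (Inl a) (Inr d)"
  "\<not> rle (ptri P Q) (Inr c) (Inl b)"
  by (simp_all add: ptri_def hle_def rle_def pcar_def)

lemma hle_pprod [simp]:
  "hle (pprod P Q) (Inl a) (Inl b) \<longleftrightarrow> hle P a b"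
  "hle (pprod P Q) (Inr c) (Inr d) \<longleftrightarrow> hle Q c d"
  "\<not> hle (pprod P Q) (Inl a) (Inr d)"
  "\<not> hle (pprod P Q) (Inr c) (Inl b)"
  and rle_pprod [simp]:
  "rle (pprod P Q) (Inl a) (Inl b) \<longleftrightarrow> rle P a b"
  "rle (pprod P Q) (Inr c) (Inr d) \<longleftrightarrow> rle Q c d"
  "rle (pprod P Q) (Inl a) (Inr d) \<longleftrightarrow> a \<in> pcar P \<and> d \<in> pcar Q"
  "\<not> rle (pprod P Q) (Inr c) (Inl b)"
  by (simp_all add: pprod_def hle_def rle_def pcar_def)

lemma hle_psub [simp]: "hle (psub R A) x y \<longleftrightarrow> x \<in> A \<and> y \<in> A \<and> hle R x y"
  and rle_psub [simp]: "rle (psub R A) x y \<longleftrightarrow> x \<in> A \<and> y \<in> A \<and> rle R x y"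
  and hle_iota [simp]: "hle (iota P) = rle P"
  and rle_iota [simp]: "rle (iota P) = hle P"
  by (simp_all add: psub_def iota_def hle_def rle_def)

lemma tle_ptri [simp]:
  "tle (ptri P Q) (Inl a) (Inl b) \<longleftrightarrow> tle P a b"
  "tle (ptri P Q) (Inr c) (Inr d) \<longleftrightarrow> tle Q c d"
  "tle (ptri P Q) (Inl a) (Inr d) \<longleftrightarrow> a \<in> pcar P \<and> d \<in> pcar Q"
  "\<not> tle (ptri P Q) (Inr c) (Inl b)"
  by (simp_all add: tle_def)

lemma sum_pred_eqI:
  assumes "\<And>a b. f (Inl a) (Inl b) = g (Inl a) (Inl b)" "\<And>a b. f (Inl a) (Inr b) = g (Inl a) (Inr b)"
    and "\<And>a b. f (Inr a) (Inl b) = g (Inr a) (Inl b)" "\<And>a b. f (Inr a) (Inr b) = g (Inr a) (Inr b)"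
  shows "f = g"
proof (intro ext)
  fix u v show "f u v = g u v" using assms by (cases u; cases v) simp_all
qed

lemma tle_pprod: "tle (pprod P Q) = tle (ptri P Q)"
  by (intro sum_pred_eqI) (simp_all add: tle_def)

lemma tle_psub [simp]: "tle (psub R A) x y \<longleftrightarrow> x \<in> A \<and> y \<in> A \<and> tle R x y"
  by (auto simp: tle_def)

lemma tle_iota [simp]: "tle (iota P) = tle P"
  by (intro ext) (auto simp: tle_def)

lemma pp_eqI: "pcar A = pcar B \<Longrightarrow> hle A = hle B \<Longrightarrow> rle A = rle B \<Longrightarrow> A = B"
  unfolding pcar_def hle_def rle_def by (simp add: prod_eq_iff)

lemma iota_pprod: "iota (pprod P Q) = ptri (iota P) (iota Q)"
  by (intro pp_eqI sum_pred_eqI) simp_all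

lemma iota_ptri: "iota (ptri P Q) = pprod (iota P) (iota Q)"
  by (intro pp_eqI sum_pred_eqI) simp_all

lemma theta_pprod: "theta (pprod P Q) R = theta (ptri P Q) R"
  by (rule theta_cong) (simp_all add: tle_pprod)

lemma theta_iota: "theta (iota P) R = theta P R"
  by (rule theta_cong) simp_all

lemma linear_pp_psub:
  assumes lin: "linear_pp R" and A: "A \<subseteq> pcar R"
  shows "linear_pp (psub R A)"
  unfolding linear_pp_def pcar_psub tle_psub
proof (intro conjI allI impI ballI)
  show "finite A" using finite_subset[OF A linear_pp_finite[OF lin]] .
qed (use A linear_pp_refl[OF lin] linear_pp_antisym[OF lin] linear_pp_trans[OF lin]
      linear_pp_total[OF lin] in \<open>blast | metis\<close>)+

lemma linear_pp_ptri:
  assumes P: "linear_pp P" and Q: "linear_pp Q"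
  shows "linear_pp (ptri P Q)"
  unfolding linear_pp_def
proof (intro conjI allI impI ballI)
  show "finite (pcar (ptri P Q))" using linear_pp_finite[OF P] linear_pp_finite[OF Q] by simp
next
  fix u v assume "tle (ptri P Q) u v"
  then have "u \<in> pcar (ptri P Q) \<and> v \<in> pcar (ptri P Q)"
    by (cases u; cases v) (auto dest: linear_pp_mem[OF P] linear_pp_mem[OF Q])
  then show "u \<in> pcar (ptri P Q)" "v \<in> pcar (ptri P Q)" by blast+
next
  fix u assume "u \<in> pcar (ptri P Q)"
  then show "tle (ptri P Q) u u" using linear_pp_refl[OF P] linear_pp_refl[OF Q] by auto
next
  fix u v assume "tle (ptri P Q) u v \<and> tle (ptri P Q) v u"
  then show "u = v" by (cases u; cases v) (auto intro: linear_pp_antisym[OF P] linear_pp_antisym[OF Q])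
next
  fix u v w assume uvw: "tle (ptri P Q) u v \<and> tle (ptri P Q) v w"
  show "tle (ptri P Q) u w"
  proof (cases u; cases w)
    fix a c assume "u = Inl a" "w = Inr c"
    then show ?thesis
      using uvw by (cases v) (auto dest: linear_pp_mem[OF P] linear_pp_mem[OF Q])
  qed (use uvw in \<open>(cases v; auto intro: linear_pp_trans[OF P] linear_pp_trans[OF Q])+\<close>)
next
  fix u v assume "u \<in> pcar (ptri P Q)" "v \<in> pcar (ptri P Q)"
  then show "tle (ptri P Q) u v \<or> tle (ptri P Q) v u"
    using linear_pp_total[OF P] linear_pp_total[OF Q] by (auto, blast+)
qed

lemma plane_poset_psub:
  assumes pl: "plane_poset R" and A: "A \<subseteq> pcar R"
  shows "plane_poset (psub R A)"
  unfolding plane_poset_def pcar_psub hle_psub rle_psub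
proof (intro conjI allI impI ballI)
  show "finite A" using finite_subset[OF A plane_poset_finite[OF pl]] .
next
  fix x y assume "x \<in> A" "y \<in> A" "x \<noteq> y"
  then show "(x \<in> A \<and> y \<in> A \<and> hle R x y \<or> y \<in> A \<and> x \<in> A \<and> hle R y x) \<longleftrightarrow>
    \<not> (x \<in> A \<and> y \<in> A \<and> rle R x y \<or> y \<in> A \<and> x \<in> A \<and> rle R y x)"
    using plane_poset_hle_iff_not_rle[OF pl, of x y] A by blast
qed (use A plane_poset_hle_refl[OF pl] plane_poset_rle_refl[OF pl]
      plane_poset_hle_antisym[OF pl] plane_poset_rle_antisym[OF pl]
      plane_poset_hle_trans[OF pl] plane_poset_rle_trans[OF pl] in \<open>blast | metis\<close>)+

lemma plane_poset_iota:
  assumes pl: "plane_poset P"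
  shows "plane_poset (iota P)"
  using pl unfolding plane_poset_def hle_iota rle_iota pcar_iota by (smt (verit))

lemma ple_iota_swap:
  assumes pA: "plane_poset A" and pB: "plane_poset B" and le: "ple (iota A) B"
  shows "ple (iota B) A"
proof -
  have lA: "linear_pp A" and lB: "linear_pp B" using plane_poset_linear pA pB by blast+
  have card: "card (pcar A) = card (pcar B)" using le unfolding ple_def by simp
  have reflect: "rle A x y" if "x \<in> pcar A" "y \<in> pcar A" "hle B (theta A B x) (theta A B y)" for x y
    using le that unfolding ple_def theta_iota by simp
  have "rle B u v"
    if u: "u \<in> pcar B" and v: "v \<in> pcar B" and h: "hle A (theta B A u) (theta B A v)" for u v
  proof (cases "u = v")
    case True
    then show ?thesis using plane_poset_rle_refl[OF pB u] by simp
  next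
    case False
    let ?x = "theta B A u" and ?y = "theta B A v"
    have x: "?x \<in> pcar A" and y: "?y \<in> pcar A"
      using bij_betw_apply[OF tle_iso_bij_betw[OF theta_tle_iso[OF lB lA card[symmetric]]]] u v
      by blast+
    have u_eq: "theta A B ?x = u" and v_eq: "theta A B ?y = v"
      using theta_inverse[OF lB lA card[symmetric]] u v by blast+
    with False have "?x \<noteq> ?y" by metis
    then have "\<not> rle A ?x ?y" using plane_poset_hle_iff_not_rle[OF pA x y] h by blast
    then have "\<not> hle B u v" using reflect[OF x y] unfolding u_eq v_eq by blast
    moreover have "tle B u v"
      using h tle_iso_mono[OF theta_tle_iso[OF lA lB card] x y] u_eq v_eq unfolding tle_def by simp
    ultimately show ?thesis unfolding tle_def by blast
  qed
  then show ?thesis using card unfolding ple_def theta_iota by simp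
qed

lemma ple_iota_swap_iff:
  "plane_poset A \<Longrightarrow> plane_poset B \<Longrightarrow> ple (iota A) B \<longleftrightarrow> ple (iota B) A"
  using ple_iota_swap[of A B] ple_iota_swap[of B A] by blast

section \<open>Biideals and splittings as final segments\<close>

definition final_segment :: "'a pp \<Rightarrow> 'a set \<Rightarrow> bool" where
  "final_segment R I \<longleftrightarrow> I \<subseteq> pcar R \<and> (\<forall>x\<in>pcar R - I. \<forall>y\<in>I. tle R x y)"

lemma final_segment_not_tle:
  assumes lin: "linear_pp R" and I: "final_segment R I" and x: "x \<in> pcar R - I" and y: "y \<in> I"
  shows "\<not> tle R y x"
  using I x y linear_pp_antisym[OF lin, of x y] unfolding final_segment_def by blast

lemma biideal_iff_final_segment:
  assumes lin: "linear_pp R"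
  shows "biideal R I \<longleftrightarrow> final_segment R I"
proof
  assume bi: "biideal R I"
  have "tle R x y" if x: "x \<in> pcar R - I" and y: "y \<in> I" for x y
  proof (rule ccontr)
    assume "\<not> tle R x y"
    then have "tle R y x" using linear_pp_total[OF lin, of x y] x y bi unfolding biideal_def by blast
    then show False using bi x y unfolding biideal_def tle_def by blast
  qed
  then show "final_segment R I" using bi unfolding biideal_def final_segment_def by blast
next
  assume I: "final_segment R I"
  have "y \<in> I" if x: "x \<in> I" and xy: "tle R x y" for x y
    using final_segment_not_tle[OF lin I _ x] linear_pp_mem[OF lin xy] xy by blast
  then show "biideal R I" using I unfolding biideal_def final_segment_def tle_def by blast
qed

lemma splits_iff:
  assumes I: "I \<subseteq> pcar R"
  shows "splits R I \<longleftrightarrow> (\<forall>x\<in>pcar R - I. \<forall>y\<in>I. rle R x y \<and> \<not> hle R x y \<and> \<not> hle R y x \<and> \<not> rle R y x)"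
proof -
  let ?Y = "pprod (psub R (pcar R - I)) (psub R I)"
  let ?k = "case_sum id id :: 'a + 'a \<Rightarrow> 'a"
  have "bij_betw ?k (pcar ?Y) (pcar R)"
    unfolding bij_betw_def inj_on_def using I by (auto simp: image_Un image_image)
  then have "splits R I \<longleftrightarrow> (\<forall>u\<in>pcar ?Y. \<forall>v\<in>pcar ?Y.
      (hle ?Y u v \<longleftrightarrow> hle R (?k u) (?k v)) \<and> (rle ?Y u v \<longleftrightarrow> rle R (?k u) (?k v)))"
    unfolding splits_def pp_iso_def by blast
  also have "\<dots> \<longleftrightarrow> (\<forall>x\<in>pcar R - I. \<forall>y\<in>I. rle R x y \<and> \<not> hle R x y \<and> \<not> hle R y x \<and> \<not> rle R y x)"
    by (auto simp: ball_Un)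
  finally show ?thesis .
qed

lemma subset_splits_iff:
  assumes pl: "plane_poset R"
  shows "I \<subseteq> pcar R \<and> splits R I \<longleftrightarrow> final_segment R I \<and> (\<forall>x\<in>pcar R - I. \<forall>y\<in>I. \<not> hle R x y)"
proof (cases "I \<subseteq> pcar R")
  case I: True
  have "rle R x y \<and> \<not> hle R x y \<and> \<not> hle R y x \<and> \<not> rle R y x \<longleftrightarrow> tle R x y \<and> \<not> hle R x y"
    if seg: "final_segment R I" and x: "x \<in> pcar R - I" and y: "y \<in> I" for x y
    using final_segment_not_tle[OF plane_poset_linear[OF pl] seg x y] unfolding tle_def by blast
  then show ?thesis
    using I unfolding splits_iff[OF I] final_segment_def tle_def by blast
qed (simp add: final_segment_def)

section \<open>Products below a plane poset\<close>

lemma bij_betw_case_sum: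
  assumes f: "bij_betw f A C" and g: "bij_betw g B D" and disj: "C \<inter> D = {}"
  shows "bij_betw (case_sum f g) (Inl ` A \<union> Inr ` B) (C \<union> D)"
proof (rule bij_betw_combine[OF _ _ disj])
  have "bij_betw Inl A (Inl ` A)" "bij_betw Inr B (Inr ` B)" by (simp_all add: bij_betw_def)
  then show "bij_betw (case_sum f g) (Inl ` A) C" "bij_betw (case_sum f g) (Inr ` B) D"
    using f g bij_betw_comp_iff[of Inl A "Inl ` A" "case_sum f g" C]
      bij_betw_comp_iff[of Inr B "Inr ` B" "case_sum f g" D] by (simp_all add: case_sum_o_inj)
qed

text \<open>\<open>P \<triangleleft> Q\<close> and \<open>PQ\<close> have the same carrier and total order; they differ only in whether
  \<open>Inl a\<close> lies h-below or r-below \<open>Inr b\<close>.\<close>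
definition psum :: "bool \<Rightarrow> 'a pp \<Rightarrow> 'b pp \<Rightarrow> ('a + 'b) pp" where
  "psum c P Q = (if c then ptri P Q else pprod P Q)"

lemma psum_True [simp]: "psum True P Q = ptri P Q"
  and psum_False [simp]: "psum False P Q = pprod P Q"
  and pcar_psum [simp]: "pcar (psum c P Q) = Inl ` pcar P \<union> Inr ` pcar Q"
  and theta_psum: "theta (psum c P Q) R = theta (ptri P Q) R"
  by (simp_all add: psum_def theta_pprod)

lemma hle_psum [simp]:
  "hle (psum c P Q) (Inl a) (Inl b) \<longleftrightarrow> hle P a b"
  "hle (psum c P Q) (Inr a') (Inr b') \<longleftrightarrow> hle Q a' b'"
  "hle (psum c P Q) (Inl a) (Inr b') \<longleftrightarrow> c \<and> a \<in> pcar P \<and> b' \<in> pcar Q"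
  "\<not> hle (psum c P Q) (Inr a') (Inl b)"
  by (simp_all add: psum_def)

lemma tle_iso_theta_psub:
  assumes "linear_pp P" "linear_pp R" "A \<subseteq> pcar R" "card (pcar P) = card A"
  shows "tle_iso P (psub R A) (theta P (psub R A))"
  using assms by (intro theta_tle_iso linear_pp_psub) simp_all

lemma bij_betw_theta_psub:
  assumes "linear_pp P" "linear_pp R" "A \<subseteq> pcar R" "card (pcar P) = card A"
  shows "bij_betw (theta P (psub R A)) (pcar P) A"
  using tle_iso_bij_betw[OF tle_iso_theta_psub[OF assms]] by simp

lemma theta_ptri_case_sum:
  assumes lP: "linear_pp P" and lQ: "linear_pp Q" and lR: "linear_pp R"
    and I: "final_segment R I"
    and cP: "card (pcar P) = card (pcar R - I)" and cQ: "card (pcar Q) = card I"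
    and u: "u \<in> pcar (ptri P Q)"
  shows "theta (ptri P Q) R u = case_sum (theta P (psub R (pcar R - I))) (theta Q (psub R I)) u"
proof -
  let ?L = "psub R (pcar R - I)" and ?U = "psub R I"
  let ?f = "theta P ?L" and ?h = "theta Q ?U"
  have IR: "I \<subseteq> pcar R" using I unfolding final_segment_def by blast
  note isoL = tle_iso_theta_psub[OF lP lR Diff_subset cP]
    and isoU = tle_iso_theta_psub[OF lQ lR IR cQ]
  note f = bij_betw_theta_psub[OF lP lR Diff_subset cP]
    and h = bij_betw_theta_psub[OF lQ lR IR cQ]
  have "bij_betw (case_sum ?f ?h) (pcar (ptri P Q)) (pcar R)"
    using bij_betw_case_sum[OF f h] IR by (simp add: Int_commute Un_absorb2)
  moreover have "tle R (case_sum ?f ?h u) (case_sum ?f ?h v)"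
    if u: "u \<in> pcar (ptri P Q)" and v: "v \<in> pcar (ptri P Q)" and uv: "tle (ptri P Q) u v" for u v
  proof (cases u; cases v)
    fix a b assume "u = Inl a" "v = Inl b"
    then show ?thesis using u v uv tle_iso_mono[OF isoL, of a b] by auto
  next
    fix a b assume "u = Inl a" "v = Inr b"
    then show ?thesis
      using u v I bij_betw_apply[OF f, of a] bij_betw_apply[OF h, of b] unfolding final_segment_def by auto
  next
    fix a b assume "u = Inr a" "v = Inr b"
    then show ?thesis using u v uv tle_iso_mono[OF isoU, of a b] by auto
  next
    fix a b assume "u = Inr a" "v = Inl b"
    then show ?thesis using uv by simp
  qed
  ultimately have "tle_iso (ptri P Q) R (case_sum ?f ?h)" unfolding tle_iso_def by blast
  then show ?thesis by (rule theta_eqI[OF linear_pp_ptri[OF lP lQ] lR _ u])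
qed

lemma theta_ptri_image_Inr:
  assumes lP: "linear_pp P" and lQ: "linear_pp Q" and lR: "linear_pp R"
    and I: "final_segment R I"
    and cP: "card (pcar P) = card (pcar R - I)" and cQ: "card (pcar Q) = card I"
  shows "theta (ptri P Q) R ` Inr ` pcar Q = I"
proof -
  have IR: "I \<subseteq> pcar R" using I unfolding final_segment_def by blast
  have "theta (ptri P Q) R ` Inr ` pcar Q = theta Q (psub R I) ` pcar Q"
    using theta_ptri_case_sum[OF assms] by (force simp: image_image)
  also have "\<dots> = I" using bij_betw_imp_surj_on[OF bij_betw_theta_psub[OF lQ lR IR cQ]] .
  finally show ?thesis .
qed

lemma final_segment_theta_image_Inr:
  assumes lP: "linear_pp P" and lQ: "linear_pp Q" and lR: "linear_pp R"
    and card: "card (pcar (ptri P Q)) = card (pcar R)"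
  defines "I \<equiv> theta (ptri P Q) R ` Inr ` pcar Q"
  shows "final_segment R I" and "card (pcar P) = card (pcar R - I)" and "card (pcar Q) = card I"
proof -
  let ?t = "theta (ptri P Q) R"
  have iso: "tle_iso (ptri P Q) R ?t" using theta_tle_iso[OF linear_pp_ptri[OF lP lQ] lR card] .
  have bij: "bij_betw ?t (Inl ` pcar P \<union> Inr ` pcar Q) (pcar R)" using tle_iso_bij_betw[OF iso] by simp
  have inj: "inj_on ?t (Inl ` pcar P \<union> Inr ` pcar Q)" using bij_betw_imp_inj_on[OF bij] .
  have "pcar R - I = ?t ` (Inl ` pcar P \<union> Inr ` pcar Q) - ?t ` Inr ` pcar Q"
    unfolding I_def bij_betw_imp_surj_on[OF bij] ..
  also have "\<dots> = ?t ` ((Inl ` pcar P \<union> Inr ` pcar Q) - Inr ` pcar Q)"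
    by (rule inj_on_image_set_diff[OF inj, symmetric]) blast+
  also have "(Inl ` pcar P \<union> Inr ` pcar Q) - Inr ` pcar Q = Inl ` pcar P" by blast
  finally have compl: "pcar R - I = ?t ` Inl ` pcar P" .
  show "card (pcar Q) = card I"
    unfolding I_def using inj_on_subset[OF inj] by (simp add: card_image)
  show "card (pcar P) = card (pcar R - I)"
    unfolding compl using inj_on_subset[OF inj] by (simp add: card_image)
  have "tle R (?t (Inl a)) (?t (Inr b))" if "a \<in> pcar P" "b \<in> pcar Q" for a b
    using tle_iso_mono[OF iso, of "Inl a" "Inr b"] that by simp
  then show "final_segment R I"
    unfolding final_segment_def compl using bij_betw_imp_surj_on[OF bij] I_def by auto
qed

lemma ple_psub_iff:
  assumes "linear_pp P" "linear_pp R" "A \<subseteq> pcar R" "card (pcar P) = card A"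
  shows "ple P (psub R A) \<longleftrightarrow>
    (\<forall>a\<in>pcar P. \<forall>b\<in>pcar P. hle R (theta P (psub R A) a) (theta P (psub R A) b) \<longrightarrow> hle P a b)"
  using assms bij_betw_apply[OF bij_betw_theta_psub[OF assms]] unfolding ple_def by auto

text \<open>Across the blocks \<open>\<le>h\<close> can only go from \<open>R - I\<close> into \<open>I\<close>, since \<open>I\<close> is final;
  for \<open>PQ\<close> (\<open>\<not> c\<close>) it must not occur at all.\<close>
lemma ple_psum_iff:
  assumes lP: "linear_pp P" and lQ: "linear_pp Q" and lR: "linear_pp R"
    and I: "final_segment R I"
    and cP: "card (pcar P) = card (pcar R - I)" and cQ: "card (pcar Q) = card I"
  shows "ple (psum c P Q) R \<longleftrightarrow> ple P (psub R (pcar R - I)) \<and> ple Q (psub R I)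
    \<and> (c \<or> (\<forall>x\<in>pcar R - I. \<forall>y\<in>I. \<not> hle R x y))"
proof -
  let ?f = "theta P (psub R (pcar R - I))" and ?h = "theta Q (psub R I)"
  have IR: "I \<subseteq> pcar R" using I unfolding final_segment_def by blast
  note f = bij_betw_theta_psub[OF lP lR Diff_subset cP]
    and h = bij_betw_theta_psub[OF lQ lR IR cQ]
  have theta: "theta (psum c P Q) R u = case_sum ?f ?h u" if "u \<in> pcar (psum c P Q)" for u
    using theta_ptri_case_sum[OF lP lQ lR I cP cQ] that by (simp add: theta_psum)
  have "card (pcar (psum c P Q)) = card (pcar P) + card (pcar Q)"
    using card_Plus[OF linear_pp_finite[OF lP] linear_pp_finite[OF lQ]] by (simp add: Plus_def)
  also have "\<dots> = card (pcar R)"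
    using cP cQ IR linear_pp_finite[OF lR] by (simp add: card_Diff_subset card_mono finite_subset)
  finally have card: "card (pcar (psum c P Q)) = card (pcar R)" .
  have not_hle: "\<not> hle R (?h b) (?f a)" if "a \<in> pcar P" "b \<in> pcar Q" for a b
    using final_segment_not_tle[OF lR I bij_betw_apply[OF f] bij_betw_apply[OF h]] that
    unfolding tle_def by blast
  have "ple (psum c P Q) R \<longleftrightarrow> (\<forall>u\<in>pcar (psum c P Q). \<forall>v\<in>pcar (psum c P Q).
      hle R (case_sum ?f ?h u) (case_sum ?f ?h v) \<longrightarrow> hle (psum c P Q) u v)"
    unfolding ple_def using card theta by simp
  also have "\<dots> \<longleftrightarrow> (\<forall>a\<in>pcar P. \<forall>b\<in>pcar P. hle R (?f a) (?f b) \<longrightarrow> hle P a b)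
      \<and> (\<forall>a\<in>pcar Q. \<forall>b\<in>pcar Q. hle R (?h a) (?h b) \<longrightarrow> hle Q a b)
      \<and> (\<forall>a\<in>pcar P. \<forall>b\<in>pcar Q. hle R (?f a) (?h b) \<longrightarrow> c)"
    using not_hle by (auto simp: ball_Un)
  also have "(\<forall>a\<in>pcar P. \<forall>b\<in>pcar Q. hle R (?f a) (?h b) \<longrightarrow> c)
      \<longleftrightarrow> (c \<or> (\<forall>x\<in>pcar R - I. \<forall>y\<in>I. \<not> hle R x y))"
    using bij_betw_ball[OF f] bij_betw_ball[OF h] by auto
  finally show ?thesis
    using ple_psub_iff[OF lP lR Diff_subset cP] ple_psub_iff[OF lQ lR IR cQ] by simp
qed

lemma ple_psum_iff_exists:
  assumes lP: "linear_pp P" and lQ: "linear_pp Q" and lR: "linear_pp R"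
  shows "ple (psum c P Q) R \<longleftrightarrow> (\<exists>I. final_segment R I \<and> (c \<or> (\<forall>x\<in>pcar R - I. \<forall>y\<in>I. \<not> hle R x y))
    \<and> ple P (psub R (pcar R - I)) \<and> ple Q (psub R I))"
proof
  assume le: "ple (psum c P Q) R"
  then have "card (pcar (ptri P Q)) = card (pcar R)" unfolding ple_def by simp
  note seg = final_segment_theta_image_Inr[OF lP lQ lR this]
  show "\<exists>I. final_segment R I \<and> (c \<or> (\<forall>x\<in>pcar R - I. \<forall>y\<in>I. \<not> hle R x y))
    \<and> ple P (psub R (pcar R - I)) \<and> ple Q (psub R I)"
    using le ple_psum_iff[OF lP lQ lR seg] seg(1) by blast
next
  assume "\<exists>I. final_segment R I \<and> (c \<or> (\<forall>x\<in>pcar R - I. \<forall>y\<in>I. \<not> hle R x y))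
    \<and> ple P (psub R (pcar R - I)) \<and> ple Q (psub R I)"
  then obtain I where I: "final_segment R I" "c \<or> (\<forall>x\<in>pcar R - I. \<forall>y\<in>I. \<not> hle R x y)"
    and le: "ple P (psub R (pcar R - I))" "ple Q (psub R I)" by blast
  have "card (pcar P) = card (pcar R - I)" "card (pcar Q) = card I" using le unfolding ple_def by simp_all
  then show "ple (psum c P Q) R" using ple_psum_iff[OF lP lQ lR I(1)] I(2) le by blast
qed

lemma final_segment_unique:
  assumes lP: "linear_pp P" and lQ: "linear_pp Q" and lR: "linear_pp R"
    and I: "final_segment R I" and le: "ple P (psub R (pcar R - I))" "ple Q (psub R I)"
  shows "I = theta (ptri P Q) R ` Inr ` pcar Q"
proof -
  have "card (pcar P) = card (pcar R - I)" "card (pcar Q) = card I" using le unfolding ple_def by simp_all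
  then show ?thesis using theta_ptri_image_Inr[OF lP lQ lR I] by simp
qed

lemma iota_psum: "iota (psum c P Q) = psum (\<not> c) (iota P) (iota Q)"
  by (simp add: psum_def iota_pprod iota_ptri)

lemma theta_ptri_iota: "theta (ptri (iota P) (iota Q)) R = theta (ptri P Q) R"
  using theta_psum[of False "iota P" "iota Q" R] theta_iota[of "pprod P Q" R]
  by (simp add: iota_pprod[symmetric] theta_pprod)

lemma ple_iota_psum_iff_exists:
  assumes pP: "plane_poset P" and pQ: "plane_poset Q" and pR: "plane_poset R"
  shows "ple (iota (psum c P Q)) R \<longleftrightarrow> (\<exists>I. final_segment R I \<and> (\<not> c \<or> (\<forall>x\<in>pcar R - I. \<forall>y\<in>I. \<not> hle R x y))
    \<and> ple (iota (psub R (pcar R - I))) P \<and> ple (iota (psub R I)) Q)"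
proof -
  have swap: "ple (iota P) (psub R (pcar R - I)) \<and> ple (iota Q) (psub R I)
      \<longleftrightarrow> ple (iota (psub R (pcar R - I))) P \<and> ple (iota (psub R I)) Q" if "final_segment R I" for I
    using that ple_iota_swap_iff[OF pP plane_poset_psub[OF pR Diff_subset]]
      ple_iota_swap_iff[OF pQ plane_poset_psub[OF pR]]
    unfolding final_segment_def by blast
  have "ple (iota (psum c P Q)) R \<longleftrightarrow> (\<exists>I. final_segment R I \<and> (\<not> c \<or> (\<forall>x\<in>pcar R - I. \<forall>y\<in>I. \<not> hle R x y))
    \<and> ple (iota P) (psub R (pcar R - I)) \<and> ple (iota Q) (psub R I))"
    unfolding iota_psum
    by (rule ple_psum_iff_exists[OF plane_poset_linear plane_poset_linear plane_poset_linear])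
      (simp_all add: plane_poset_iota pP pQ pR)
  with swap show ?thesis by blast
qed

lemma iota_final_segment_unique:
  assumes pP: "plane_poset P" and pQ: "plane_poset Q" and pR: "plane_poset R"
    and I: "final_segment R I" and le: "ple (iota (psub R (pcar R - I))) P" "ple (iota (psub R I)) Q"
  shows "I = theta (ptri P Q) R ` Inr ` pcar Q"
proof -
  have IR: "I \<subseteq> pcar R" using I unfolding final_segment_def by blast
  have "ple (iota P) (psub R (pcar R - I))" "ple (iota Q) (psub R I)"
    using le ple_iota_swap_iff[OF pP plane_poset_psub[OF pR Diff_subset]]
      ple_iota_swap_iff[OF pQ plane_poset_psub[OF pR IR]] by blast+
  from final_segment_unique[OF plane_poset_linear[OF plane_poset_iota[OF pP]]
      plane_poset_linear[OF plane_poset_iota[OF pQ]] plane_poset_linear[OF pR] I this]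
  show ?thesis by (simp add: theta_ptri_iota)
qed

lemma ple_ptri_iff:
  assumes lP: "linear_pp P" and lQ: "linear_pp Q" and lR: "linear_pp R"
  shows "(ple (ptri P Q) R \<longleftrightarrow>
        (\<exists>I0. biideal R I0 \<and> ple P (psub R (pcar R - I0)) \<and> ple Q (psub R I0)))
     \<and> (\<forall>I0. biideal R I0 \<and> ple P (psub R (pcar R - I0)) \<and> ple Q (psub R I0)
           \<longrightarrow> I0 = theta (pprod P Q) R ` (Inr ` pcar Q))"
  unfolding biideal_iff_final_segment[OF lR] theta_pprod
  using ple_psum_iff_exists[OF lP lQ lR, of True] final_segment_unique[OF lP lQ lR] by simp

lemma ple_pprod_iff:
  assumes lP: "linear_pp P" and lQ: "linear_pp Q" and pR: "plane_poset R"
  shows "(ple (pprod P Q) R \<longleftrightarrow>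
        (\<exists>I0. I0 \<subseteq> pcar R \<and> splits R I0 \<and> ple P (psub R (pcar R - I0)) \<and> ple Q (psub R I0)))
     \<and> (\<forall>I0. I0 \<subseteq> pcar R \<and> splits R I0 \<and> ple P (psub R (pcar R - I0)) \<and> ple Q (psub R I0)
           \<longrightarrow> I0 = theta (ptri P Q) R ` (Inr ` pcar Q))"
  unfolding conj_assoc[symmetric] subset_splits_iff[OF pR]
  using ple_psum_iff_exists[OF lP lQ plane_poset_linear[OF pR], of False]
    final_segment_unique[OF lP lQ plane_poset_linear[OF pR]]
  by simp

lemma ple_iota_pprod_iff:
  assumes pP: "plane_poset P" and pQ: "plane_poset Q" and pR: "plane_poset R"
  shows "(ple (iota (pprod P Q)) R \<longleftrightarrow>
        (\<exists>I0. biideal R I0 \<and> ple (iota (psub R (pcar R - I0))) P \<and> ple (iota (psub R I0)) Q))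
     \<and> (\<forall>I0. biideal R I0 \<and> ple (iota (psub R (pcar R - I0))) P \<and> ple (iota (psub R I0)) Q
           \<longrightarrow> I0 = theta (pprod P Q) R ` (Inr ` pcar Q))"
  unfolding biideal_iff_final_segment[OF plane_poset_linear[OF pR]] theta_pprod
  using ple_iota_psum_iff_exists[OF pP pQ pR, of False] iota_final_segment_unique[OF pP pQ pR]
  by simp

lemma ple_iota_ptri_iff:
  assumes pP: "plane_poset P" and pQ: "plane_poset Q" and pR: "plane_poset R"
  shows "(ple (iota (ptri P Q)) R \<longleftrightarrow>
        (\<exists>I0. I0 \<subseteq> pcar R \<and> splits R I0 \<and> ple (iota (psub R (pcar R - I0))) P \<and> ple (iota (psub R I0)) Q))
     \<and> (\<forall>I0. I0 \<subseteq> pcar R \<and> splits R I0 \<and> ple (iota (psub R (pcar R - I0))) P \<and> ple (iota (psub R I0)) Q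
           \<longrightarrow> I0 = theta (ptri P Q) R ` (Inr ` pcar Q))"
  unfolding conj_assoc[symmetric] subset_splits_iff[OF pR]
  using ple_iota_psum_iff_exists[OF pP pQ pR, of True] iota_final_segment_unique[OF pP pQ pR]
  by simp

theorem lemma22:
  fixes P :: "'a pp" and Q :: "'b pp" and R :: "'c pp"
  assumes "plane_poset P" and "plane_poset Q" and "plane_poset R"
  shows
   "((ple (ptri P Q) R \<longleftrightarrow>
        (\<exists>I0. biideal R I0 \<and> ple P (psub R (pcar R - I0)) \<and> ple Q (psub R I0)))
     \<and> (\<forall>I0. biideal R I0 \<and> ple P (psub R (pcar R - I0)) \<and> ple Q (psub R I0)
           \<longrightarrow> I0 = theta (pprod P Q) R ` (Inr ` pcar Q)))
  \<and> ((ple (pprod P Q) R \<longleftrightarrow>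
        (\<exists>I0. I0 \<subseteq> pcar R \<and> splits R I0 \<and> ple P (psub R (pcar R - I0)) \<and> ple Q (psub R I0)))
     \<and> (\<forall>I0. I0 \<subseteq> pcar R \<and> splits R I0 \<and> ple P (psub R (pcar R - I0)) \<and> ple Q (psub R I0)
           \<longrightarrow> I0 = theta (ptri P Q) R ` (Inr ` pcar Q)))
  \<and> ((ple (iota (pprod P Q)) R \<longleftrightarrow>
        (\<exists>I0. biideal R I0 \<and> ple (iota (psub R (pcar R - I0))) P \<and> ple (iota (psub R I0)) Q))
     \<and> (\<forall>I0. biideal R I0 \<and> ple (iota (psub R (pcar R - I0))) P \<and> ple (iota (psub R I0)) Q
           \<longrightarrow> I0 = theta (pprod P Q) R ` (Inr ` pcar Q)))
  \<and> ((ple (iota (ptri P Q)) R \<longleftrightarrow>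
        (\<exists>I0. I0 \<subseteq> pcar R \<and> splits R I0 \<and> ple (iota (psub R (pcar R - I0))) P \<and> ple (iota (psub R I0)) Q))
     \<and> (\<forall>I0. I0 \<subseteq> pcar R \<and> splits R I0 \<and> ple (iota (psub R (pcar R - I0))) P \<and> ple (iota (psub R I0)) Q
           \<longrightarrow> I0 = theta (ptri P Q) R ` (Inr ` pcar Q)))"
proof -
  have lin: "linear_pp P" "linear_pp Q" "linear_pp R" using assms plane_poset_linear by blast+
  show ?thesis
    by (rule conjI[OF ple_ptri_iff[OF lin] conjI[OF ple_pprod_iff[OF lin(1,2) assms(3)]
          conjI[OF ple_iota_pprod_iff[OF assms] ple_iota_ptri_iff[OF assms]]]])
qed

end
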